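(* Consider the general Int-GARCH$(p,q,w)$ model with $p>0$, $q>0$, $w\ge 0$: for integers $t$, $$r_t=h_t\cdot[\epsilon_t-\eta_t,\ \epsilon_t+\eta_t]=[\lambda_t-\delta_t,\ \lambda_t+\delta_t],\qquad \lambda_t=h_t\epsilon_t,\ \delta_t=h_t\eta_t,$$ $$h_t=\mu+\sum_{i=1}^{p}\alpha_i|\lambda_{t-i}|+\sum_{i=1}^{q}\beta_i\delta_{t-i}+\sum_{i=1}^{w}\gamma_ih_{t-i},$$ where $\mu>0$ and all $\alpha_i,\beta_i,\gamma_i$ are positive constants, $\{\epsilon_t\}$ are i.i.d. $N(0,1)$, $\{\eta_t\}$ are i.i.d. $\Gamma(k,1)$ (shape $k>0$, scale 1), the two sequences are mutually independent, and $(\epsilon_t,\eta_t)$ is independent of $\{h_s:s\le t\}$. Let $m=\max\{p,q,w\}$ and for $i=1,\dots,m$ define $$x_{i,t}=\alpha_i|\epsilon_t|\,\mathbf 1_{\{1\le i\le p\}}+\beta_i\eta_t\,\mathbf 1_{\{1\le i\le q\}}+\gamma_i\,\mathbf 1_{\{1\le i\le w\}},\qquad \mu_i=E(x_{i,t}).$$ Assume $\{r_t\}$ starts from its infinite past with a finite mean. Then $E h_t<\infty$ if and only if $\sum_{i=1}^{m}\mu_i<1$. When this holds, $$E h_t=\frac{\mu}{1-\sum_{i=1}^{m}\mu_i},\qquad E r_t=\bigl[-kE(h_t),\ kE(h_t)\bigr].$$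
   Context: Here $\cdot$ denotes scalar multiplication of an interval, and the expectation of a random interval $[\lambda-\delta,\lambda+\delta]$ is its Aumann expectation $[E\lambda-E\delta,\ E\lambda+E\delta]$. *)

theory Defs
  imports "HOL-Probability.Probability"
begin

definition gamma_density :: "real \<Rightarrow> real \<Rightarrow> real" where
  "gamma_density k x = (if 0 < x then x powr (k - 1) * exp (- x) / Gamma k else 0)"

definition igarch_x ::
  "nat \<Rightarrow> nat \<Rightarrow> nat \<Rightarrow> (nat \<Rightarrow> real) \<Rightarrow> (nat \<Rightarrow> real) \<Rightarrow> (nat \<Rightarrow> real)
   \<Rightarrow> (int \<Rightarrow> 'a \<Rightarrow> real) \<Rightarrow> (int \<Rightarrow> 'a \<Rightarrow> real) \<Rightarrow> nat \<Rightarrow> int \<Rightarrow> 'a \<Rightarrow> real" where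
  "igarch_x p q w \<alpha> \<beta> \<gamma> eps eta i t \<omega> =
     (if 1 \<le> i \<and> i \<le> p then \<alpha> i * \<bar>eps t \<omega>\<bar> else 0)
   + (if 1 \<le> i \<and> i \<le> q then \<beta> i * eta t \<omega> else 0)
   + (if 1 \<le> i \<and> i \<le> w then \<gamma> i else 0)"

text \<open>Aumann expectation of the random interval [lam - del, lam + del],
  represented as the pair (lower endpoint, upper endpoint).\<close>
definition interval_expectation ::
  "'a measure \<Rightarrow> ('a \<Rightarrow> real) \<Rightarrow> ('a \<Rightarrow> real) \<Rightarrow> real \<times> real" where
  "interval_expectation M lam del =
     (integral\<^sup>L M lam - integral\<^sup>L M del, integral\<^sup>L M lam + integral\<^sup>L M del)"

end

theory Submission
  imports Defs
begin

text \<open>The recursion reads \<open>h s = mu + (\<Sum>i=1..m. x i (s - i) * h (s - i))\<close>, where the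
  coefficient \<open>x i (s - i)\<close> is independent of \<open>h (s - i)\<close> and has mean \<open>mean_x i\<close>. If \<open>h\<close> is integrable, taking expectations and using
  stationarity gives \<open>E h = mu + mean_sum * E h\<close>, which forces \<open>mean_sum < 1\<close> since \<open>mu > 0\<close>.
  Conversely, unrolling the recursion \<open>d\<close> steps back writes \<open>h t\<close> as a part driven by \<open>mu\<close>,
  with mean at most \<open>mu / (1 - mean_sum)\<close>, plus a part driven by \<open>m\<close> initial values. Where
  these are all at most \<open>L\<close>, the second part is at most \<open>L\<close> times an unrolling whose mean decays
  like \<open>r ^ d\<close> for some \<open>r < 1\<close>; by stationarity the remaining event has probability at most
  \<open>m * P(h 0 > L)\<close>. This bounds \<open>E (min (h t) c)\<close> by \<open>mu / (1 - mean_sum)\<close> for every \<open>c\<close>, and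
  monotone convergence gives integrability.\<close>

lemma subalgebra_vimage_algebra:
  "f \<in> measurable M N \<Longrightarrow> subalgebra M (vimage_algebra (space M) f N)"
  by (auto simp: subalgebra_def sets_vimage_algebra2 measurable_space intro: measurable_sets)

lemma (in prob_space) indep_var_of_indep_subalgebras:
  assumes ind: "indep_set (sets F) (sets G)"
    and F: "subalgebra M F" and G: "subalgebra M G"
    and X: "X \<in> measurable F N1" and Y: "Y \<in> measurable G N2"
  shows "indep_var N1 X N2 Y"
  unfolding indep_var_eq
proof (intro conjI)
  show "random_variable N1 X" using measurable_from_subalg[OF F X] .
  show "random_variable N2 Y" using measurable_from_subalg[OF G Y] .
  have spF: "space F = space M" and spG: "space G = space M"
    using F G by (auto simp: subalgebra_def)
  have "sigma_sets (space M) {X -` A \<inter> space M | A. A \<in> sets N1} \<subseteq> sets F"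
    unfolding spF[symmetric]
    by (rule sets.sigma_sets_subset) (use measurable_sets[OF X] in \<open>auto simp: spF\<close>)
  moreover have "sigma_sets (space M) {Y -` A \<inter> space M | A. A \<in> sets N2} \<subseteq> sets G"
    unfolding spG[symmetric]
    by (rule sets.sigma_sets_subset) (use measurable_sets[OF Y] in \<open>auto simp: spG\<close>)
  ultimately show "indep_set (sigma_sets (space M) {X -` A \<inter> space M | A. A \<in> sets N1})
                       (sigma_sets (space M) {Y -` A \<inter> space M | A. A \<in> sets N2})"
    using ind F G by (intro indep_setI) (auto simp: subalgebra_def intro: indep_setD)
qed

lemma (in prob_space) measure_gt_eventually_small:
  fixes X :: "'a \<Rightarrow> real"
  assumes X: "X \<in> borel_measurable M" and \<eta>: "\<eta> > 0"
  shows "\<exists>L>0. measure M {\<omega>\<in>space M. X \<omega> > L} \<le> \<eta>"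
proof -
  define B where "B n = {\<omega>\<in>space M. X \<omega> > real n}" for n
  have "(\<lambda>n. measure M (B n)) \<longlonglongrightarrow> measure M (\<Inter>n. B n)"
    by (rule finite_Lim_measure_decseq) (use X in \<open>auto simp: B_def decseq_def\<close>)
  moreover have "(\<Inter>n. B n) = {}"
  proof safe
    fix \<omega> assume "\<omega> \<in> (\<Inter>n. B n)"
    moreover obtain n :: nat where "X \<omega> < real n" using reals_Archimedean2 by blast
    ultimately show "\<omega> \<in> {}" by (auto simp: B_def dest!: spec[of _ n])
  qed
  ultimately have "eventually (\<lambda>n. measure M (B n) < \<eta>) sequentially"
    using \<eta> by (auto intro: order_tendstoD(2))
  then obtain N where "\<And>n. n \<ge> N \<Longrightarrow> measure M (B n) < \<eta>"
    by (auto simp: eventually_sequentially)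
  from this[of "Suc N"] show ?thesis
    by (intro exI[of _ "real (Suc N)"]) (auto simp: B_def)
qed

lemma (in prob_space) indep_var_vimage_algebras:
  assumes ind: "indep_set (sets (vimage_algebra (space M) P N1)) (sets (vimage_algebra (space M) R N2))"
    and P: "P \<in> measurable M N1" and R: "R \<in> measurable M N2"
    and g: "g \<in> measurable N1 K1" and Y: "Y \<in> measurable (vimage_algebra (space M) R N2) K2"
  shows "indep_var K1 (\<lambda>\<omega>. g (P \<omega>)) K2 Y"
proof (rule indep_var_of_indep_subalgebras[OF ind subalgebra_vimage_algebra[OF P]
      subalgebra_vimage_algebra[OF R] _ Y])
  have "g \<circ> P \<in> measurable (vimage_algebra (space M) P N1) K1"
    by (rule measurable_comp[OF measurable_vimage_algebra1 g]) (use P in \<open>auto simp: measurable_space\<close>)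
  then show "(\<lambda>\<omega>. g (P \<omega>)) \<in> measurable (vimage_algebra (space M) P N1) K1"
    by (simp add: comp_def)
qed

lemma sum_if_le_eq:
  fixes f :: "nat \<Rightarrow> 'b::comm_monoid_add"
  assumes "p \<le> m"
  shows "(\<Sum>i=1..m. if 1 \<le> i \<and> i \<le> p then f i else 0) = (\<Sum>i=1..p. f i)"
proof -
  have "(\<Sum>i=1..m. if 1 \<le> i \<and> i \<le> p then f i else 0) = (\<Sum>i\<in>{i\<in>{1..m}. 1 \<le> i \<and> i \<le> p}. f i)"
    by (rule sum.inter_filter[symmetric]) simp
  also have "{i\<in>{1..m}. 1 \<le> i \<and> i \<le> p} = {1..p}" using assms by auto
  finally show ?thesis .
qed

lemma gamma_density_nonneg: "k > 0 \<Longrightarrow> 0 \<le> gamma_density k x"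
  by (auto simp: gamma_density_def intro!: divide_nonneg_pos Gamma_real_pos)

lemma has_bochner_integral_gamma_density_mean:
  assumes k: "k > 0"
  shows "has_bochner_integral lborel (\<lambda>x. gamma_density k x * x) k"
proof (rule has_bochner_integral_nn_integral)
  have G: "Gamma k > 0" using k by (rule Gamma_real_pos)
  have eq: "ennreal (gamma_density k x * x)
      = ennreal (indicator {0..} x * x powr (k + 1 - 1) / exp x) * ennreal (1 / Gamma k)" for x
  proof (cases "x > 0")
    case True
    then have "x powr (k - 1) * x = x powr k" by (simp add: powr_add[symmetric] powr_diff)
    then show ?thesis using True G by (simp add: gamma_density_def exp_minus field_simps ennreal_mult'[symmetric])
  qed (auto simp: gamma_density_def indicator_def)
  have "(\<integral>\<^sup>+x. ennreal (gamma_density k x * x) \<partial>lborel)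
      = (\<integral>\<^sup>+x. ennreal (indicator {0..} x * x powr (k + 1 - 1) / exp x) \<partial>lborel) * ennreal (1 / Gamma k)"
    unfolding eq by (rule nn_integral_multc) measurable
  also have "\<dots> = ennreal (Gamma (k + 1)) * ennreal (1 / Gamma k)"
    using Gamma_conv_nn_integral_real[of "k + 1"] k by simp
  also have "Gamma (k + 1) = k * Gamma k"
    using k by (intro Gamma_plus1) (auto elim!: nonpos_Ints_cases)
  finally show "(\<integral>\<^sup>+x. ennreal (gamma_density k x * x) \<partial>lborel) = ennreal k"
    using G k by (simp add: ennreal_mult'[symmetric])
qed (use k in \<open>auto simp: gamma_density_def\<close>)

lemma (in prob_space) gamma_distributed_moments:
  assumes k: "k > 0" and X: "distributed M lborel X (\<lambda>x. ennreal (gamma_density k x))"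
  shows "integrable M X" "expectation X = k" "AE \<omega> in M. X \<omega> \<ge> 0"
proof -
  note mean = has_bochner_integral_gamma_density_mean[OF k]
  show "integrable M X"
    using distributed_integrable[OF X, of "\<lambda>x. x"] gamma_density_nonneg[OF k] mean
    by (simp add: has_bochner_integral_iff)
  show "expectation X = k"
    using distributed_integral[OF X, of "\<lambda>x. x"] gamma_density_nonneg[OF k] mean
    by (simp add: has_bochner_integral_iff)
  have "distr M lborel X = density lborel (\<lambda>x. ennreal (gamma_density k x))"
    using X by (simp add: distributed_def)
  then have "AE x in distr M lborel X. x \<ge> 0"
    by (simp only:) (subst AE_density, auto simp: gamma_density_def)
  then show "AE \<omega> in M. X \<omega> \<ge> 0"
    using X by (intro AE_distrD[of X M lborel]) (auto simp: distributed_def)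
qed

lemma (in prob_space) std_normal_distributed_moments:
  assumes X: "distributed M lborel X (\<lambda>x. ennreal (std_normal_density x))"
  shows "integrable M X" "expectation X = 0"
    "integrable M (\<lambda>\<omega>. \<bar>X \<omega>\<bar>)" "expectation (\<lambda>\<omega>. \<bar>X \<omega>\<bar>) = sqrt (2 / pi)"
proof -
  have nn: "0 \<le> std_normal_density x" for x by (simp add: normal_density_nonneg)
  show "integrable M X"
    using distributed_integrable[OF X, of "\<lambda>x. x"] nn integrable_std_normal_moment[of 1] by simp
  show "expectation X = 0"
    using distributed_integral[OF X, of "\<lambda>x. x"] nn integral_std_normal_moment_odd[of 0] by simp
  show "integrable M (\<lambda>\<omega>. \<bar>X \<omega>\<bar>)"
    using distributed_integrable[OF X, of "\<lambda>x. \<bar>x\<bar>"] nn integrable_std_normal_moment_abs[of 1] by simp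
  show "expectation (\<lambda>\<omega>. \<bar>X \<omega>\<bar>) = sqrt (2 / pi)"
    using distributed_integral[OF X, of "\<lambda>x. \<bar>x\<bar>"] nn integral_std_normal_moment_abs_odd[of 0] by simp
qed

section \<open>Unrolled linear recurrences\<close>

text \<open>\<open>linrec a m c T b d\<close> is the value at time \<open>T + d\<close> of the solution of
  \<open>y s = c + (\<Sum>i=1..m. a i (s - i) * y (s - i))\<close> with initial values \<open>y (T - n) = b n\<close>.\<close>

function linrec :: "(nat \<Rightarrow> int \<Rightarrow> real) \<Rightarrow> nat \<Rightarrow> real \<Rightarrow> int \<Rightarrow> (nat \<Rightarrow> real) \<Rightarrow> nat \<Rightarrow> real" where
  "linrec a m c T b d =
     (if d = 0 then b 0
      else c + (\<Sum>i=1..m. a i (T + int d - int i) *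
                  (if i < d then linrec a m c T b (d - i) else b (i - d))))"
  by pat_completeness auto
termination by (relation "Wellfounded.measure (\<lambda>(a, m, c, T, b, d). d)") auto

declare linrec.simps[simp del]

lemma linrec_0 [simp]: "linrec a m c T b 0 = b 0"
  by (simp add: linrec.simps)

lemma linrec_pos:
  "d > 0 \<Longrightarrow> linrec a m c T b d =
     c + (\<Sum>i=1..m. a i (T + int d - int i) * (if i < d then linrec a m c T b (d - i) else b (i - d)))"
  by (subst linrec.simps) simp

lemma linrec_solution:
  assumes rec: "\<And>s. H s = c + (\<Sum>i=1..m. a i (s - int i) * H (s - int i))"
  shows "H (T + int d) = linrec a m c T (\<lambda>n. H (T - int n)) d"
proof (induction d rule: less_induct)
  case (less d)
  show ?case
  proof (cases "d = 0")
    case False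
    then have d: "d > 0" by simp
    have "H (T + int d - int i)
        = (if i < d then linrec a m c T (\<lambda>n. H (T - int n)) (d - i) else H (T - int (i - d)))"
      if "i \<ge> 1" for i
      using less.IH[of "d - i"] that by (auto simp: of_nat_diff algebra_simps)
    then show ?thesis
      unfolding linrec_pos[OF d] using rec[of "T + int d"] by (simp add: algebra_simps)
  qed simp
qed

lemma linrec_split:
  "linrec a m c T b d = linrec a m c T (\<lambda>_. 0) d + linrec a m 0 T b d"
proof (induction d rule: less_induct)
  case (less d)
  show ?case
  proof (cases "d = 0")
    case False
    then have d: "d > 0" by simp
    have "(\<Sum>i=1..m. a i (T + int d - int i) * (if i < d then linrec a m c T b (d - i) else b (i - d)))
        = (\<Sum>i=1..m. a i (T + int d - int i) * (if i < d then linrec a m c T (\<lambda>_. 0) (d - i) else 0))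
          + (\<Sum>i=1..m. a i (T + int d - int i) * (if i < d then linrec a m 0 T b (d - i) else b (i - d)))"
      unfolding sum.distrib[symmetric]
      by (rule sum.cong) (auto simp: less.IH[of "d - _"] algebra_simps)
    then show ?thesis
      unfolding linrec_pos[OF d] by simp
  qed simp
qed

lemma linrec_nonneg:
  assumes "c \<ge> 0" "\<And>n. b n \<ge> 0" "\<And>i s. a i s \<ge> 0"
  shows "linrec a m c T b d \<ge> 0"
proof (induction d rule: less_induct)
  case (less d)
  then show ?case
    using assms by (subst linrec.simps) (auto intro!: add_nonneg_nonneg sum_nonneg mult_nonneg_nonneg)
qed

lemma linrec_le_mult:
  assumes m: "m > 0" and b: "\<And>n. n < m \<Longrightarrow> b n \<le> B" and a: "\<And>i s. a i s \<ge> 0"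
  shows "linrec a m 0 T b d \<le> B * linrec a m 0 T (\<lambda>_. 1) d"
proof (induction d rule: less_induct)
  case (less d)
  show ?case
  proof (cases "d = 0")
    case False
    then have d: "d > 0" by simp
    have le: "a i (T + int d - int i) * (if i < d then linrec a m 0 T b (d - i) else b (i - d))
        \<le> B * (a i (T + int d - int i) * (if i < d then linrec a m 0 T (\<lambda>_. 1) (d - i) else 1))"
      if "i \<in> {1..m}" for i
    proof (cases "i < d")
      case True
      then show ?thesis
        using mult_left_mono[OF less.IH[of "d - i"] a] that by (simp add: mult.left_commute)
    next
      case False
      have "i - d < m" using that d by auto
      then show ?thesis
        using mult_left_mono[OF b a] False by (simp add: mult.commute)
    qed
    show ?thesis
      unfolding linrec_pos[OF d] by (simp add: sum_distrib_left) (auto intro!: sum_mono le)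
  qed (use b m in simp)
qed

lemma linrec_const_le_fixpoint:
  assumes \<mu>: "\<And>i. \<mu> i \<ge> 0" and S: "(\<Sum>i=1..m. \<mu> i) < 1" and c: "c \<ge> 0"
  shows "linrec (\<lambda>i _. \<mu> i) m c T (\<lambda>_. 0) d \<le> c / (1 - (\<Sum>i=1..m. \<mu> i))"
proof (induction d rule: less_induct)
  case (less d)
  define K where "K = c / (1 - (\<Sum>i=1..m. \<mu> i))"
  have K: "K \<ge> 0" using S c by (simp add: K_def)
  show ?case
  proof (cases "d = 0")
    case False
    have "linrec (\<lambda>i _. \<mu> i) m c T (\<lambda>_. 0) d
        = c + (\<Sum>i=1..m. \<mu> i * (if i < d then linrec (\<lambda>i _. \<mu> i) m c T (\<lambda>_. 0) (d - i) else 0))"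
      using False by (simp add: linrec_pos[where d=d])
    also have "\<dots> \<le> c + (\<Sum>i=1..m. \<mu> i * K)"
      using less.IH K by (intro add_left_mono sum_mono mult_left_mono \<mu>) (auto simp: K_def)
    also have "\<dots> = c + (\<Sum>i=1..m. \<mu> i) * K"
      by (simp add: sum_distrib_right)
    also have "\<dots> = K"
      using S by (simp add: K_def field_simps)
    finally show ?thesis by (simp add: K_def)
  qed (use K in \<open>simp add: K_def\<close>)
qed

lemma linrec_const_decay:
  assumes \<mu>: "\<And>i. \<mu> i \<ge> 0" and r: "0 < r" "r \<le> 1" and S: "(\<Sum>i=1..m. \<mu> i) \<le> r ^ m"
  shows "linrec (\<lambda>i _. \<mu> i) m 0 T (\<lambda>_. 1) d \<le> r ^ d"
proof (induction d rule: less_induct)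
  case (less d)
  show ?case
  proof (cases "d = 0")
    case False
    define x where "x i = (if i < d then linrec (\<lambda>i _. \<mu> i) m 0 T (\<lambda>_. 1) (d - i) else 1)" for i
    have x: "x i * r ^ m \<le> r ^ d" if "i \<in> {1..m}" for i
    proof (cases "i < d")
      case True
      then have "x i * r ^ m \<le> r ^ (d - i) * r ^ m"
        using less.IH[of "d - i"] that r by (auto simp: x_def intro: mult_right_mono)
      also have "\<dots> \<le> r ^ d"
        using that r by (auto simp: power_add[symmetric] intro: power_decreasing)
      finally show ?thesis .
    qed (use that r in \<open>auto simp: x_def intro: power_decreasing\<close>)
    have "(\<Sum>i=1..m. \<mu> i * x i) * r ^ m = (\<Sum>i=1..m. \<mu> i * (x i * r ^ m))"
      by (simp add: sum_distrib_right mult.assoc)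
    also have "\<dots> \<le> (\<Sum>i=1..m. \<mu> i) * r ^ d"
      by (auto simp: sum_distrib_right intro!: sum_mono mult_left_mono \<mu> x)
    also have "\<dots> \<le> r ^ d * r ^ m"
      using S r by (simp add: mult.commute mult_left_mono)
    finally show ?thesis
      using False r by (simp add: linrec_pos[where d=d] x_def[symmetric])
  qed simp
qed

section \<open>The Int-GARCH model\<close>

locale int_garch = prob_space M for M :: "'a measure" +
  fixes p q w :: nat and mu k :: real and \<alpha> \<beta> \<gamma> :: "nat \<Rightarrow> real"
    and eps eta h :: "int \<Rightarrow> 'a \<Rightarrow> real"
  assumes p_pos: "p > 0"
    and mu_pos: "mu > 0" and k_pos: "k > 0"
    and \<alpha>_pos: "\<And>i. 1 \<le> i \<Longrightarrow> i \<le> p \<Longrightarrow> \<alpha> i > 0"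
    and \<beta>_pos: "\<And>i. 1 \<le> i \<Longrightarrow> i \<le> q \<Longrightarrow> \<beta> i > 0"
    and \<gamma>_pos: "\<And>i. 1 \<le> i \<Longrightarrow> i \<le> w \<Longrightarrow> \<gamma> i > 0"
    and eps_distr: "\<And>s. distributed M lborel (eps s) (\<lambda>x. ennreal (std_normal_density x))"
    and eta_distr: "\<And>s. distributed M lborel (eta s) (\<lambda>x. ennreal (gamma_density k x))"
    and indep_innov: "indep_vars (\<lambda>_. borel)
                        (\<lambda>j. case j of Inl s \<Rightarrow> eps s | Inr s \<Rightarrow> eta s) (UNIV :: (int + int) set)"
    and h_measurable: "\<And>s. h s \<in> borel_measurable M"
    and h_nonneg: "\<And>s \<omega>. \<omega> \<in> space M \<Longrightarrow> h s \<omega> \<ge> 0"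
    and indep_past: "\<And>s. indep_set
                        (sets (vimage_algebra (space M) (\<lambda>\<omega>. (eps s \<omega>, eta s \<omega>)) (borel \<Otimes>\<^sub>M borel)))
                        (sets (vimage_algebra (space M) (\<lambda>\<omega>. restrict (\<lambda>u. h u \<omega>) {..s})
                                (PiM {..s} (\<lambda>_. borel))))"
    and recursion: "\<And>s \<omega>. \<omega> \<in> space M \<Longrightarrow>
          h s \<omega> = mu
            + (\<Sum>i=1..p. \<alpha> i * \<bar>h (s - int i) \<omega> * eps (s - int i) \<omega>\<bar>)
            + (\<Sum>i=1..q. \<beta> i * (h (s - int i) \<omega> * eta (s - int i) \<omega>))
            + (\<Sum>i=1..w. \<gamma> i * h (s - int i) \<omega>)"
    and stationary: "\<And>s. distr M borel (h s) = distr M borel (h 0)"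
begin

definition m :: nat where "m = max p (max q w)"

abbreviation x :: "nat \<Rightarrow> int \<Rightarrow> 'a \<Rightarrow> real" where
  "x \<equiv> igarch_x p q w \<alpha> \<beta> \<gamma> eps eta"

definition x_of :: "nat \<Rightarrow> real \<times> real \<Rightarrow> real" where
  "x_of i z = (if 1 \<le> i \<and> i \<le> p then \<alpha> i * \<bar>fst z\<bar> else 0)
     + (if 1 \<le> i \<and> i \<le> q then \<beta> i * snd z else 0) + (if 1 \<le> i \<and> i \<le> w then \<gamma> i else 0)"

definition mean_x :: "nat \<Rightarrow> real" where
  "mean_x i = (if 1 \<le> i \<and> i \<le> p then \<alpha> i * sqrt (2 / pi) else 0)
     + (if 1 \<le> i \<and> i \<le> q then \<beta> i * k else 0) + (if 1 \<le> i \<and> i \<le> w then \<gamma> i else 0)"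

definition mean_sum :: real where "mean_sum = (\<Sum>i=1..m. mean_x i)"

lemma m_ge: "p \<le> m" "q \<le> m" "w \<le> m" "m > 0"
  using p_pos by (auto simp: m_def)

lemma x_eq_x_of: "x i s \<omega> = x_of i (eps s \<omega>, eta s \<omega>)"
  by (simp add: igarch_x_def x_of_def)

lemma x_of_measurable [measurable]: "x_of i \<in> borel_measurable (borel \<Otimes>\<^sub>M borel)"
  unfolding x_of_def by measurable

lemma eps_measurable [measurable]: "eps s \<in> borel_measurable M"
  using eps_distr[of s] by (simp add: distributed_def)

lemma eta_measurable [measurable]: "eta s \<in> borel_measurable M"
  using eta_distr[of s] by (simp add: distributed_def)

lemma mean_x_nonneg: "mean_x i \<ge> 0"
  unfolding mean_x_def using k_pos \<alpha>_pos[of i] \<beta>_pos[of i] \<gamma>_pos[of i]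
  by (auto intro!: add_nonneg_nonneg)

lemma mean_sum_nonneg: "mean_sum \<ge> 0"
  unfolding mean_sum_def by (intro sum_nonneg mean_x_nonneg)

lemma integrable_x: "integrable M (x i s)" and expectation_x: "expectation (x i s) = mean_x i"
proof -
  note eps = std_normal_distributed_moments[OF eps_distr[of s]]
  note eta = gamma_distributed_moments[OF k_pos eta_distr[of s]]
  have x: "x i s = (\<lambda>\<omega>. (if 1 \<le> i \<and> i \<le> p then \<alpha> i else 0) * \<bar>eps s \<omega>\<bar>
      + (if 1 \<le> i \<and> i \<le> q then \<beta> i else 0) * eta s \<omega> + (if 1 \<le> i \<and> i \<le> w then \<gamma> i else 0))"
    by (auto simp: igarch_x_def fun_eq_iff)
  show "integrable M (x i s)" unfolding x using eps eta by auto
  show "expectation (x i s) = mean_x i" unfolding x using eps eta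
    by (simp add: mean_x_def prob_space)
qed

lemma AE_x_nonneg: "AE \<omega> in M. \<forall>i s. x i s \<omega> \<ge> 0"
proof -
  have "AE \<omega> in M. \<forall>s. eta s \<omega> \<ge> 0"
    using gamma_distributed_moments(3)[OF k_pos eta_distr] by (simp add: AE_all_countable)
  then show ?thesis
    by eventually_elim
      (auto simp: igarch_x_def intro!: add_nonneg_nonneg mult_nonneg_nonneg
         less_imp_le[OF \<alpha>_pos] less_imp_le[OF \<beta>_pos] less_imp_le[OF \<gamma>_pos])
qed

lemma h_rec:
  assumes \<omega>: "\<omega> \<in> space M"
  shows "h s \<omega> = mu + (\<Sum>i=1..m. x i (s - int i) \<omega> * h (s - int i) \<omega>)"
proof -
  have "(\<Sum>i=1..m. x i (s - int i) \<omega> * h (s - int i) \<omega>)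
    = (\<Sum>i=1..m. if 1 \<le> i \<and> i \<le> p then \<alpha> i * \<bar>h (s - int i) \<omega> * eps (s - int i) \<omega>\<bar> else 0)
    + (\<Sum>i=1..m. if 1 \<le> i \<and> i \<le> q then \<beta> i * (h (s - int i) \<omega> * eta (s - int i) \<omega>) else 0)
    + (\<Sum>i=1..m. if 1 \<le> i \<and> i \<le> w then \<gamma> i * h (s - int i) \<omega> else 0)"
    unfolding sum.distrib[symmetric]
    by (rule sum.cong) (auto simp: igarch_x_def algebra_simps abs_mult h_nonneg[OF \<omega>])
  also have "\<dots> = (\<Sum>i=1..p. \<alpha> i * \<bar>h (s - int i) \<omega> * eps (s - int i) \<omega>\<bar>)
            + (\<Sum>i=1..q. \<beta> i * (h (s - int i) \<omega> * eta (s - int i) \<omega>))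
            + (\<Sum>i=1..w. \<gamma> i * h (s - int i) \<omega>)"
    by (simp only: sum_if_le_eq m_ge)
  finally show ?thesis
    using recursion[OF \<omega>, of s] by simp
qed

definition innov :: "int + int \<Rightarrow> 'a \<Rightarrow> real" where
  "innov j = (case j of Inl s \<Rightarrow> eps s | Inr s \<Rightarrow> eta s)"

definition innov_before :: "int \<Rightarrow> (int + int) set" where
  "innov_before v = Inl ` {..<v} \<union> Inr ` {..<v}"

definition past :: "int \<Rightarrow> 'a measure" where
  "past v = vimage_algebra (space M) (\<lambda>\<omega>. restrict (\<lambda>j. innov j \<omega>) (innov_before v))
              (PiM (innov_before v) (\<lambda>_. borel))"

lemma innov_measurable: "innov j \<in> borel_measurable M"
  by (cases j) (auto simp: innov_def)

lemma restrict_innov_measurable: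
  "(\<lambda>\<omega>. restrict (\<lambda>j. innov j \<omega>) J) \<in> measurable M (PiM J (\<lambda>_. borel))"
  by (rule measurable_restrict) (rule innov_measurable)

lemma innov_measurable_past:
  assumes j: "j \<in> innov_before v"
  shows "innov j \<in> borel_measurable (past v)"
proof -
  have "(\<lambda>f. f j) \<circ> (\<lambda>\<omega>. restrict (\<lambda>j. innov j \<omega>) (innov_before v)) \<in> borel_measurable (past v)"
    unfolding past_def
    by (rule measurable_comp[OF measurable_vimage_algebra1 measurable_component_singleton[OF j]])
       (auto simp: space_PiM)
  then show ?thesis
    using j by (simp add: comp_def)
qed

lemma x_measurable_past:
  assumes "r < v"
  shows "x i r \<in> borel_measurable (past v)"
proof -
  have "(\<lambda>\<omega>. (eps r \<omega>, eta r \<omega>)) \<in> measurable (past v) (borel \<Otimes>\<^sub>M borel)"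
    using innov_measurable_past[of "Inl r" v] innov_measurable_past[of "Inr r" v] assms
    by (intro measurable_Pair) (auto simp: innov_def innov_before_def)
  from measurable_comp[OF this x_of_measurable[of i]] show ?thesis
    by (simp add: comp_def x_eq_x_of[abs_def])
qed

lemma indep_x_past:
  assumes Y: "Y \<in> borel_measurable (past v)"
  shows "indep_var borel (x i v) borel Y"
proof -
  define now where "now = {Inl v, Inr v :: int + int}"
  have "indep_vars (\<lambda>_. borel) innov UNIV"
    using indep_innov unfolding innov_def .
  then have "indep_var (PiM now (\<lambda>_. borel)) (\<lambda>\<omega>. restrict (\<lambda>j. innov j \<omega>) now)
      (PiM (innov_before v) (\<lambda>_. borel)) (\<lambda>\<omega>. restrict (\<lambda>j. innov j \<omega>) (innov_before v))"
    by (rule indep_var_restrict) (auto simp: now_def innov_before_def)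
  then have "indep_set
      (sets (vimage_algebra (space M) (\<lambda>\<omega>. restrict (\<lambda>j. innov j \<omega>) now) (PiM now (\<lambda>_. borel))))
      (sets (vimage_algebra (space M) (\<lambda>\<omega>. restrict (\<lambda>j. innov j \<omega>) (innov_before v))
         (PiM (innov_before v) (\<lambda>_. borel))))"
    unfolding indep_var_eq by (simp add: sets_vimage_algebra)
  moreover have "(\<lambda>f. x_of i (f (Inl v), f (Inr v))) \<in> borel_measurable (PiM now (\<lambda>_. borel))"
    by (rule measurable_compose[OF _ x_of_measurable], rule measurable_Pair)
       (auto simp: now_def intro!: measurable_component_singleton)
  ultimately have "indep_var borel (\<lambda>\<omega>. x_of i (restrict (\<lambda>j. innov j \<omega>) now (Inl v),
      restrict (\<lambda>j. innov j \<omega>) now (Inr v))) borel Y"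
    using Y unfolding past_def
    by (intro indep_var_vimage_algebras[OF _ restrict_innov_measurable restrict_innov_measurable])
  then show ?thesis
    by (simp add: now_def innov_def x_eq_x_of[abs_def])
qed

lemma indep_innov_h:
  assumes g: "g \<in> borel_measurable (borel \<Otimes>\<^sub>M borel)"
  shows "indep_var borel (\<lambda>\<omega>. g (eps s \<omega>, eta s \<omega>)) borel (h s)"
proof (rule indep_var_vimage_algebras[OF indep_past _ _ g])
  let ?R = "\<lambda>\<omega>. restrict (\<lambda>u. h u \<omega>) {..s}"
  show "?R \<in> measurable M (PiM {..s} (\<lambda>_. borel))"
    by (rule measurable_restrict) (rule h_measurable)
  have "(\<lambda>f. f s) \<circ> ?R \<in> borel_measurable (vimage_algebra (space M) ?R (PiM {..s} (\<lambda>_. borel)))"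
    by (rule measurable_comp[OF measurable_vimage_algebra1 measurable_component_singleton])
       (auto simp: space_PiM)
  then show "h s \<in> borel_measurable (vimage_algebra (space M) ?R (PiM {..s} (\<lambda>_. borel)))"
    by (simp add: comp_def)
qed measurable

lemma linrec_x_measurable_past:
  "T + int d \<le> v \<Longrightarrow> (\<lambda>\<omega>. linrec (\<lambda>i s. x i s \<omega>) m c T (\<lambda>_. b) d) \<in> borel_measurable (past v)"
proof (induction d arbitrary: v rule: less_induct)
  case (less d)
  show ?case
  proof (cases "d = 0")
    case False
    then have d: "d > 0" by simp
    have "(\<lambda>\<omega>. x i (T + int d - int i) \<omega>
          * (if i < d then linrec (\<lambda>i s. x i s \<omega>) m c T (\<lambda>_. b) (d - i) else b))
        \<in> borel_measurable (past v)" if "i \<in> {1..m}" for i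
      using x_measurable_past[of "T + int d - int i" v i] less.IH[of "d - i" v] that less.prems
      by (cases "i < d") auto
    then show ?thesis
      unfolding linrec_pos[OF d] by measurable
  qed simp
qed

lemma integrable_x_mult_past:
  assumes Y: "Y \<in> borel_measurable (past v)" "integrable M Y"
  shows "integrable M (\<lambda>\<omega>. x i v \<omega> * Y \<omega>)"
    and "expectation (\<lambda>\<omega>. x i v \<omega> * Y \<omega>) = mean_x i * expectation Y"
  using indep_var_integrable[OF indep_x_past[OF Y(1)] integrable_x Y(2)]
    indep_var_lebesgue_integral[OF indep_x_past[OF Y(1)] integrable_x Y(2)]
  by (simp_all add: expectation_x)

lemma
  assumes Y: "\<And>i. i \<in> {1..m} \<Longrightarrow> Y i \<in> borel_measurable (past (s - int i))"
    "\<And>i. i \<in> {1..m} \<Longrightarrow> integrable M (Y i)"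
  shows integrable_affine_x_past: "integrable M (\<lambda>\<omega>. c + (\<Sum>i=1..m. x i (s - int i) \<omega> * Y i \<omega>))"
    and expectation_affine_x_past: "expectation (\<lambda>\<omega>. c + (\<Sum>i=1..m. x i (s - int i) \<omega> * Y i \<omega>))
      = c + (\<Sum>i=1..m. mean_x i * expectation (Y i))"
proof -
  note xY = integrable_x_mult_past[OF Y]
  have sum: "integrable M (\<lambda>\<omega>. \<Sum>i=1..m. x i (s - int i) \<omega> * Y i \<omega>)"
    by (rule Bochner_Integration.integrable_sum) (rule xY)
  then show "integrable M (\<lambda>\<omega>. c + (\<Sum>i=1..m. x i (s - int i) \<omega> * Y i \<omega>))"
    by simp
  have "expectation (\<lambda>\<omega>. \<Sum>i=1..m. x i (s - int i) \<omega> * Y i \<omega>)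
      = (\<Sum>i=1..m. expectation (\<lambda>\<omega>. x i (s - int i) \<omega> * Y i \<omega>))"
    by (rule Bochner_Integration.integral_sum) (rule xY)
  also have "\<dots> = (\<Sum>i=1..m. mean_x i * expectation (Y i))"
    by (rule sum.cong) (simp_all add: xY)
  finally show "expectation (\<lambda>\<omega>. c + (\<Sum>i=1..m. x i (s - int i) \<omega> * Y i \<omega>))
      = c + (\<Sum>i=1..m. mean_x i * expectation (Y i))"
    using sum by (simp add: prob_space)
qed

lemma expectation_linrec_x:
  "integrable M (\<lambda>\<omega>. linrec (\<lambda>i s. x i s \<omega>) m c T (\<lambda>_. b) d)
   \<and> expectation (\<lambda>\<omega>. linrec (\<lambda>i s. x i s \<omega>) m c T (\<lambda>_. b) d)
     = linrec (\<lambda>i _. mean_x i) m c T (\<lambda>_. b) d"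
proof (induction d rule: less_induct)
  case (less d)
  show ?case
  proof (cases "d = 0")
    case False
    then have d: "d > 0" by simp
    define Y where "Y i = (if i < d then (\<lambda>\<omega>. linrec (\<lambda>i s. x i s \<omega>) m c T (\<lambda>_. b) (d - i))
      else (\<lambda>_. b))" for i
    have Y_apply: "Y i \<omega> = (if i < d then linrec (\<lambda>i s. x i s \<omega>) m c T (\<lambda>_. b) (d - i) else b)"
      for i \<omega>
      by (simp add: Y_def)
    have Y: "Y i \<in> borel_measurable (past (T + int d - int i))" "integrable M (Y i)"
      "expectation (Y i) = (if i < d then linrec (\<lambda>i _. mean_x i) m c T (\<lambda>_. b) (d - i) else b)"
      if "i \<in> {1..m}" for i
      using linrec_x_measurable_past[of T "d - i" "T + int d - int i" c b] less.IH[of "d - i"] that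
      by (auto simp: Y_def prob_space)
    have "(\<Sum>i=1..m. mean_x i * expectation (Y i))
        = (\<Sum>i=1..m. mean_x i * (if i < d then linrec (\<lambda>i _. mean_x i) m c T (\<lambda>_. b) (d - i) else b))"
      by (rule sum.cong) (simp_all add: Y(3))
    then show ?thesis
      using integrable_affine_x_past[OF Y(1,2), of c] expectation_affine_x_past[OF Y(1,2), of c]
      unfolding linrec_pos[OF d] by (simp add: Y_apply)
  qed (simp add: prob_space)
qed

lemma integrable_h_iff: "integrable M (h s) \<longleftrightarrow> integrable M (h 0)"
proof -
  have "integrable M (h s) \<longleftrightarrow> integrable (distr M borel (h s)) (\<lambda>x. x)" for s
    by (subst integrable_distr_eq) (auto simp: h_measurable)
  then show ?thesis
    using stationary[of s] by metis
qed

lemma expectation_h_eq: "expectation (h s) = expectation (h 0)"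
proof -
  have "expectation (h s) = integral\<^sup>L (distr M borel (h s)) (\<lambda>x. x)" for s
    by (subst integral_distr) (auto simp: h_measurable)
  then show ?thesis
    using stationary[of s] by metis
qed

lemma prob_h_gt_eq: "prob {\<omega>\<in>space M. h s \<omega> > L} = prob {\<omega>\<in>space M. h 0 \<omega> > L}"
proof -
  have "prob {\<omega>\<in>space M. h s \<omega> > L} = measure (distr M borel (h s)) {L<..}" for s
    by (subst measure_distr) (auto simp: h_measurable intro!: arg_cong[where f="measure M"])
  then show ?thesis
    using stationary[of s] by metis
qed

lemma
  assumes "integrable M (h s)"
  shows integrable_x_mult_h: "integrable M (\<lambda>\<omega>. x i s \<omega> * h s \<omega>)"
    and expectation_x_mult_h: "expectation (\<lambda>\<omega>. x i s \<omega> * h s \<omega>) = mean_x i * expectation (h s)"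
proof -
  have indep: "indep_var borel (x i s) borel (h s)"
    using indep_innov_h[OF x_of_measurable[of i], of s] by (simp add: x_eq_x_of[abs_def])
  show "integrable M (\<lambda>\<omega>. x i s \<omega> * h s \<omega>)"
    using indep_var_integrable[OF indep integrable_x assms] .
  show "expectation (\<lambda>\<omega>. x i s \<omega> * h s \<omega>) = mean_x i * expectation (h s)"
    using indep_var_lebesgue_integral[OF indep integrable_x assms] by (simp add: expectation_x)
qed

lemma
  assumes h: "integrable M (h t)"
  shows mean_sum_less_1: "mean_sum < 1"
    and expectation_h: "expectation (h t) = mu / (1 - mean_sum)"
proof -
  define E where "E = expectation (h t)"
  have h': "integrable M (h s)" for s
    using h integrable_h_iff by blast
  have Eh: "expectation (h s) = E" for s
    unfolding E_def using expectation_h_eq by metis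
  have "E = expectation (\<lambda>\<omega>. mu + (\<Sum>i=1..m. x i (t - int i) \<omega> * h (t - int i) \<omega>))"
    unfolding E_def by (rule Bochner_Integration.integral_cong) (simp_all only: h_rec[symmetric])
  also have "\<dots> = mu + (\<Sum>i=1..m. mean_x i * E)"
    using integrable_x_mult_h[OF h'] by (simp add: expectation_x_mult_h[OF h'] Eh prob_space)
  also have "\<dots> = mu + mean_sum * E"
    by (simp add: mean_sum_def sum_distrib_right)
  finally have E_eq: "E = mu + mean_sum * E" .
  have "E \<ge> 0"
    unfolding E_def by (rule integral_nonneg_AE) (auto intro: h_nonneg)
  then show S: "mean_sum < 1"
    using E_eq mu_pos by (metis add_le_same_cancel2 linorder_not_le mult_le_cancel_right1 nle_le)
  show "expectation (h t) = mu / (1 - mean_sum)"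
    using E_eq S by (simp add: E_def field_simps)
qed

lemma
  assumes h: "integrable M (h t)"
  shows integrable_h_mult_eps: "integrable M (\<lambda>\<omega>. h t \<omega> * eps t \<omega>)"
    and integrable_h_mult_eta: "integrable M (\<lambda>\<omega>. h t \<omega> * eta t \<omega>)"
    and interval_expectation_r: "interval_expectation M (\<lambda>\<omega>. h t \<omega> * eps t \<omega>) (\<lambda>\<omega>. h t \<omega> * eta t \<omega>)
             = (- k * expectation (h t), k * expectation (h t))"
proof -
  have eps: "indep_var borel (eps t) borel (h t)" and eta: "indep_var borel (eta t) borel (h t)"
    using indep_innov_h[of fst t] indep_innov_h[of snd t] by simp_all
  note eps_moments = std_normal_distributed_moments[OF eps_distr[of t]]
  note eta_moments = gamma_distributed_moments[OF k_pos eta_distr[of t]]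
  show "integrable M (\<lambda>\<omega>. h t \<omega> * eps t \<omega>)" "integrable M (\<lambda>\<omega>. h t \<omega> * eta t \<omega>)"
    using indep_var_integrable[OF eps eps_moments(1) h] indep_var_integrable[OF eta eta_moments(1) h]
    by (simp_all add: mult.commute)
  moreover have "expectation (\<lambda>\<omega>. h t \<omega> * eps t \<omega>) = 0"
    "expectation (\<lambda>\<omega>. h t \<omega> * eta t \<omega>) = k * expectation (h t)"
    using indep_var_lebesgue_integral[OF eps eps_moments(1) h]
      indep_var_lebesgue_integral[OF eta eta_moments(1) h] eps_moments(2) eta_moments(2)
    by (simp_all add: mult.commute)
  ultimately show "interval_expectation M (\<lambda>\<omega>. h t \<omega> * eps t \<omega>) (\<lambda>\<omega>. h t \<omega> * eta t \<omega>)
             = (- k * expectation (h t), k * expectation (h t))"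
    by (simp add: interval_expectation_def)
qed

lemma min_h_le_unrolling:
  fixes t :: int and d :: nat
  assumes c: "c \<ge> 0" and L: "L \<ge> 0"
  defines "T \<equiv> t - int d"
  shows "AE \<omega> in M. min (h t \<omega>) c
      \<le> linrec (\<lambda>i s. x i s \<omega>) m mu T (\<lambda>_. 0) d + L * linrec (\<lambda>i s. x i s \<omega>) m 0 T (\<lambda>_. 1) d
        + c * indicator (\<Union>n<m. {\<omega>\<in>space M. h (T - int n) \<omega> > L}) \<omega>"
  using AE_x_nonneg AE_space
proof eventually_elim
  case (elim \<omega>)
  then have x: "\<And>i s. x i s \<omega> \<ge> 0" and \<omega>: "\<omega> \<in> space M" by auto
  define U where "U = linrec (\<lambda>i s. x i s \<omega>) m mu T (\<lambda>_. 0) d"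
  define V where "V = linrec (\<lambda>i s. x i s \<omega>) m 0 T (\<lambda>n. h (T - int n) \<omega>) d"
  define W where "W = linrec (\<lambda>i s. x i s \<omega>) m 0 T (\<lambda>_. 1) d"
  have "h t \<omega> = linrec (\<lambda>i s. x i s \<omega>) m mu T (\<lambda>n. h (T - int n) \<omega>) d"
    using linrec_solution[where H="\<lambda>s. h s \<omega>", OF h_rec[OF \<omega>], of T d] by (simp add: T_def)
  also have "\<dots> = U + V"
    unfolding U_def V_def by (rule linrec_split)
  finally have h: "h t \<omega> = U + V" .
  have U: "U \<ge> 0" and W: "W \<ge> 0"
    using mu_pos x by (auto simp: U_def W_def intro!: linrec_nonneg)
  show ?case
  proof (cases "\<forall>n<m. h (T - int n) \<omega> \<le> L")
    case True
    then have "V \<le> L * W"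
      unfolding V_def W_def using m_ge(4) x by (intro linrec_le_mult) auto
    moreover have "min (h t \<omega>) c \<le> h t \<omega>"
      "0 \<le> c * indicator (\<Union>n<m. {\<omega>\<in>space M. h (T - int n) \<omega> > L}) \<omega>"
      using c by simp_all
    ultimately show ?thesis
      unfolding U_def[symmetric] W_def[symmetric] using h by linarith
  next
    case False
    then have "\<omega> \<in> (\<Union>n<m. {\<omega>\<in>space M. h (T - int n) \<omega> > L})"
      using \<omega> by (auto simp: not_le)
    moreover have "min (h t \<omega>) c \<le> c" "0 \<le> L * W"
      using L W by simp_all
    ultimately show ?thesis
      using U by (simp add: U_def[symmetric] W_def[symmetric])
  qed
qed

lemma expectation_min_h_le:
  assumes S: "mean_sum < 1" and c: "c \<ge> 0" and L: "L \<ge> 0"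
    and r: "0 < r" "r \<le> 1" "mean_sum \<le> r ^ m"
  shows "expectation (\<lambda>\<omega>. min (h t \<omega>) c)
    \<le> mu / (1 - mean_sum) + L * r ^ d + c * (m * prob {\<omega>\<in>space M. h 0 \<omega> > L})"
proof -
  define T where "T = t - int d"
  define U where "U \<omega> = linrec (\<lambda>i s. x i s \<omega>) m mu T (\<lambda>_. 0) d" for \<omega>
  define W where "W \<omega> = linrec (\<lambda>i s. x i s \<omega>) m 0 T (\<lambda>_. 1) d" for \<omega>
  define B where "B = (\<Union>n<m. {\<omega>\<in>space M. h (T - int n) \<omega> > L})"
  have gt_sets: "{\<omega>\<in>space M. h s \<omega> > L} \<in> sets M" for s
    using measurable_sets[OF h_measurable, of "{L<..}" s] by (simp add: vimage_def Int_def conj_commute)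
  have B: "B \<in> sets M"
    unfolding B_def using gt_sets by blast
  have U: "integrable M U" "expectation U \<le> mu / (1 - mean_sum)"
    using expectation_linrec_x[of mu T 0 d] mu_pos S
      linrec_const_le_fixpoint[of mean_x m mu T d, OF mean_x_nonneg]
    by (simp_all add: U_def[abs_def] mean_sum_def)
  have W: "integrable M W" "expectation W \<le> r ^ d"
    using expectation_linrec_x[of 0 T 1 d] r
      linrec_const_decay[of mean_x r m T d, OF mean_x_nonneg]
    by (simp_all add: W_def[abs_def] mean_sum_def)
  have "prob B \<le> (\<Sum>n<m. prob {\<omega>\<in>space M. h (T - int n) \<omega> > L})"
    unfolding B_def by (rule finite_measure_subadditive_finite) (use gt_sets in auto)
  also have "\<dots> = m * prob {\<omega>\<in>space M. h 0 \<omega> > L}"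
    by (simp add: sum.cong[OF refl prob_h_gt_eq])
  finally have prob_B: "prob B \<le> m * prob {\<omega>\<in>space M. h 0 \<omega> > L}" .
  have "expectation (\<lambda>\<omega>. min (h t \<omega>) c) \<le> expectation (\<lambda>\<omega>. U \<omega> + L * W \<omega> + c * indicator B \<omega>)"
  proof (rule integral_mono_AE)
    show "integrable M (\<lambda>\<omega>. min (h t \<omega>) c)"
      by (rule integrable_const_bound[where B=c]) (use h_nonneg c h_measurable in auto)
    show "integrable M (\<lambda>\<omega>. U \<omega> + L * W \<omega> + c * indicator B \<omega>)"
      using U W B by (auto intro!: integrable_real_indicator simp: emeasure_eq_measure)
    show "AE \<omega> in M. min (h t \<omega>) c \<le> U \<omega> + L * W \<omega> + c * indicator B \<omega>"
      using min_h_le_unrolling[OF c L, of t d] by (simp add: U_def W_def B_def T_def)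
  qed
  also have "\<dots> = expectation U + L * expectation W + c * prob B"
    using U W B by (simp add: integrable_real_indicator emeasure_eq_measure)
  also have "\<dots> \<le> mu / (1 - mean_sum) + L * r ^ d + c * (m * prob {\<omega>\<in>space M. h 0 \<omega> > L})"
    using U W prob_B c L by (intro add_mono mult_left_mono) auto
  finally show ?thesis .
qed

lemma expectation_min_h_le_fixpoint:
  assumes S: "mean_sum < 1" and c: "c \<ge> 0"
  shows "expectation (\<lambda>\<omega>. min (h t \<omega>) c) \<le> mu / (1 - mean_sum)"
proof (rule field_le_epsilon)
  fix e :: real assume e: "e > 0"
  define r where "r = max (1/2) (root m mean_sum)"
  have r: "0 < r" "r < 1"
    using S m_ge(4) by (auto simp: r_def)
  have "mean_sum = root m mean_sum ^ m"
    using m_ge(4) mean_sum_nonneg by simp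
  also have "\<dots> \<le> r ^ m"
    by (rule power_mono) (use mean_sum_nonneg in \<open>auto simp: r_def intro: real_root_ge_zero\<close>)
  finally have Sr: "mean_sum \<le> r ^ m" .
  have cm: "c * m \<ge> 0"
    using c by simp
  then have tail_bound: "e / 2 / (c * m + 1) > 0"
    using e by (intro divide_pos_pos) auto
  from measure_gt_eventually_small[OF h_measurable[of 0] this]
  obtain L where L: "L > 0" and tail: "prob {\<omega>\<in>space M. h 0 \<omega> > L} \<le> e / 2 / (c * m + 1)"
    by blast
  obtain d where d: "r ^ d < e / 2 / L"
    using real_arch_pow_inv[of "e / 2 / L" r] e L r by auto
  have "c * (m * prob {\<omega>\<in>space M. h 0 \<omega> > L}) \<le> c * m * (e / 2 / (c * m + 1))"
    using mult_left_mono[OF tail cm] by (simp add: mult.assoc)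
  also have "\<dots> \<le> (c * m + 1) * (e / 2 / (c * m + 1))"
    using tail_bound by (intro mult_right_mono) auto
  also have "\<dots> = e / 2"
    using cm by (metis add_nonneg_pos nonzero_mult_div_cancel_left times_divide_eq_right
        zero_less_one less_numeral_extra(3))
  finally have "c * (m * prob {\<omega>\<in>space M. h 0 \<omega> > L}) \<le> e / 2" .
  moreover have "L * r ^ d \<le> e / 2"
    using d L by (simp add: less_divide_eq algebra_simps)
  moreover note expectation_min_h_le[OF S c less_imp_le[OF L] r(1) less_imp_le[OF r(2)] Sr, of t d]
  ultimately show "expectation (\<lambda>\<omega>. min (h t \<omega>) c) \<le> mu / (1 - mean_sum) + e"
    by linarith
qed

lemma integrable_h:
  assumes S: "mean_sum < 1"
  shows "integrable M (h t)"
proof -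
  define f where "f n = (\<lambda>\<omega>. min (h t \<omega>) (real n))" for n
  have f: "integrable M (f n)" for n
    unfolding f_def by (rule integrable_const_bound[where B="real n"]) (use h_nonneg h_measurable in auto)
  have "incseq (\<lambda>n. expectation (f n))"
  proof (rule incseq_SucI)
    show "expectation (f n) \<le> expectation (f (Suc n))" for n
      by (intro integral_mono f) (auto simp: f_def)
  qed
  moreover have "expectation (f n) \<le> mu / (1 - mean_sum)" for n
    unfolding f_def by (rule expectation_min_h_le_fixpoint[OF S]) simp
  then have "bdd_above (range (\<lambda>n. expectation (f n)))"
    by (rule bdd_aboveI2)
  ultimately have lim: "(\<lambda>n. expectation (f n)) \<longlonglongrightarrow> (SUP n. expectation (f n))"
    by (rule LIMSEQ_incseq_SUP[rotated])
  show ?thesis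
  proof (rule integral_monotone_convergence_nonneg(1)[OF f _ _ _ lim h_measurable])
    show "AE \<omega> in M. mono (\<lambda>n. f n \<omega>)"
      unfolding f_def mono_def by (auto intro!: AE_I2 min.mono)
    show "AE \<omega> in M. 0 \<le> f n \<omega>" for n
      using h_nonneg by (simp add: f_def)
    show "AE \<omega> in M. (\<lambda>n. f n \<omega>) \<longlonglongrightarrow> h t \<omega>"
    proof (rule AE_I2, rule tendsto_eventually)
      fix \<omega>
      obtain N :: nat where "h t \<omega> \<le> real N" using real_arch_simple by blast
      then show "\<forall>\<^sub>F n in sequentially. f n \<omega> = h t \<omega>"
        unfolding eventually_sequentially f_def by (auto intro!: exI[of _ N])
    qed
  qed
qed

end

theorem theorem4:
  fixes M :: "'a measure"
    and p q w :: nat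
    and mu k :: real
    and \<alpha> \<beta> \<gamma> :: "nat \<Rightarrow> real"
    and eps eta h :: "int \<Rightarrow> 'a \<Rightarrow> real"
    and t :: int
  assumes prob: "prob_space M"
    and p_pos: "p > 0" and q_pos: "q > 0"
    and mu_pos: "mu > 0" and k_pos: "k > 0"
    and \<alpha>_pos: "\<And>i. 1 \<le> i \<Longrightarrow> i \<le> p \<Longrightarrow> \<alpha> i > 0"
    and \<beta>_pos: "\<And>i. 1 \<le> i \<Longrightarrow> i \<le> q \<Longrightarrow> \<beta> i > 0"
    and \<gamma>_pos: "\<And>i. 1 \<le> i \<Longrightarrow> i \<le> w \<Longrightarrow> \<gamma> i > 0"
    and eps_distr: "\<And>s. distributed M lborel (eps s) (\<lambda>x. ennreal (std_normal_density x))"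
    and eta_distr: "\<And>s. distributed M lborel (eta s) (\<lambda>x. ennreal (gamma_density k x))"
    and indep_innov: "prob_space.indep_vars M (\<lambda>_. borel)
                        (\<lambda>j. case j of Inl s \<Rightarrow> eps s | Inr s \<Rightarrow> eta s) (UNIV :: (int + int) set)"
    and h_meas: "\<And>s. h s \<in> borel_measurable M"
    and h_nonneg: "\<And>s \<omega>. \<omega> \<in> space M \<Longrightarrow> h s \<omega> \<ge> 0"
    and indep_past: "\<And>s. prob_space.indep_set M
                        (sets (vimage_algebra (space M) (\<lambda>\<omega>. (eps s \<omega>, eta s \<omega>)) (borel \<Otimes>\<^sub>M borel)))
                        (sets (vimage_algebra (space M) (\<lambda>\<omega>. restrict (\<lambda>u. h u \<omega>) {..s})
                                (PiM {..s} (\<lambda>_. borel))))"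
    and recursion: "\<And>s \<omega>. \<omega> \<in> space M \<Longrightarrow>
          h s \<omega> = mu
            + (\<Sum>i=1..p. \<alpha> i * \<bar>h (s - int i) \<omega> * eps (s - int i) \<omega>\<bar>)
            + (\<Sum>i=1..q. \<beta> i * (h (s - int i) \<omega> * eta (s - int i) \<omega>))
            + (\<Sum>i=1..w. \<gamma> i * h (s - int i) \<omega>)"
    and stationary: "\<And>s. distr M borel (h s) = distr M borel (h 0)"
  shows "(integrable M (h t) \<longleftrightarrow>
           (\<Sum>i=1..max p (max q w). integral\<^sup>L M (igarch_x p q w \<alpha> \<beta> \<gamma> eps eta i t)) < 1)
     \<and> ((\<Sum>i=1..max p (max q w). integral\<^sup>L M (igarch_x p q w \<alpha> \<beta> \<gamma> eps eta i t)) < 1 \<longrightarrow>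
           integral\<^sup>L M (h t) =
             mu / (1 - (\<Sum>i=1..max p (max q w). integral\<^sup>L M (igarch_x p q w \<alpha> \<beta> \<gamma> eps eta i t)))
         \<and> integrable M (\<lambda>\<omega>. h t \<omega> * eps t \<omega>)
         \<and> integrable M (\<lambda>\<omega>. h t \<omega> * eta t \<omega>)
         \<and> interval_expectation M (\<lambda>\<omega>. h t \<omega> * eps t \<omega>) (\<lambda>\<omega>. h t \<omega> * eta t \<omega>)
             = (- k * integral\<^sup>L M (h t), k * integral\<^sup>L M (h t)))"
proof -
  interpret int_garch M p q w mu k \<alpha> \<beta> \<gamma> eps eta h
    by (rule int_garch.intro[OF prob int_garch_axioms.intro[OF p_pos mu_pos k_pos \<alpha>_pos \<beta>_pos \<gamma>_pos
        eps_distr eta_distr indep_innov h_meas h_nonneg indep_past recursion stationary]])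
  have "(\<Sum>i=1..max p (max q w). integral\<^sup>L M (igarch_x p q w \<alpha> \<beta> \<gamma> eps eta i t)) = mean_sum"
    by (simp add: mean_sum_def m_def expectation_x)
  then show ?thesis
    using mean_sum_less_1 expectation_h integrable_h integrable_h_mult_eps integrable_h_mult_eta
      interval_expectation_r
    by auto
qed

end
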